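(* For every $n>2$, let $K_{1,n-1}$ be the star graph on $n$ vertices. Then $\mathrm{ch}_{um}(H_P(K_{1,n-1}))\ge n-1$, while $\chi_{um}(H_P(K_{1,n-1}))=2$.
   Context: For a simple graph $G=(V,E)$, $H_P(G)$ is the hypergraph with vertex set $V$ whose hyperedges are the vertex sets of all simple paths in $G$. A coloring $C\colon V\to\mathbb Z_{>0}$ is unique-maximum if in every hyperedge the maximum color is attained by exactly one vertex. $\chi_{um}(H)$ is the minimum number of colors in a unique-maximum coloring of $H$. The um-choice number $\mathrm{ch}_{um}(H)$ is the minimum $k$ such that for every family $\{L_v\}_{v\in V}$ of sets of positive integers with $|L_v|\ge k$ there is a unique-maximum coloring $C$ with $C(v)\in L_v$ for all $v$. *)

theory Defs
  imports Main
begin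

text \<open>A simple graph is given by a vertex set V and a symmetric irreflexive
 edge relation E (a set of ordered pairs, each undirected edge present in both orientations).\<close>

type_synonym 'a graph = "'a set \<times> ('a \<times> 'a) set"
type_synonym 'a hypergraph = "'a set \<times> 'a set set"

definition simple_graph :: "'a graph \<Rightarrow> bool" where
  "simple_graph G \<longleftrightarrow> finite (fst G) \<and> snd G \<subseteq> fst G \<times> fst G \<and>
     (\<forall>u v. (u, v) \<in> snd G \<longrightarrow> (v, u) \<in> snd G \<and> u \<noteq> v)"

text \<open>Simple path: a nonempty list of distinct vertices, consecutive ones adjacent
 (a single vertex is a path of length 0).\<close>
definition simple_path :: "'a graph \<Rightarrow> 'a list \<Rightarrow> bool" where
  "simple_path G p \<longleftrightarrow> p \<noteq> [] \<and> distinct p \<and> set p \<subseteq> fst G \<and>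
     (\<forall>i. Suc i < length p \<longrightarrow> (p ! i, p ! Suc i) \<in> snd G)"

definition path_hypergraph :: "'a graph \<Rightarrow> 'a hypergraph" where
  "path_hypergraph G = (fst G, {set p | p. simple_path G p})"

definition um_coloring :: "'a hypergraph \<Rightarrow> ('a \<Rightarrow> nat) \<Rightarrow> bool" where
  "um_coloring H C \<longleftrightarrow> (\<forall>v\<in>fst H. C v > 0) \<and>
     (\<forall>e\<in>snd H. \<exists>!v. v \<in> e \<and> C v = Max (C ` e))"

definition chi_um :: "'a hypergraph \<Rightarrow> nat" where
  "chi_um H = (LEAST k. \<exists>C. um_coloring H C \<and> card (C ` fst H) = k)"

definition ch_um :: "'a hypergraph \<Rightarrow> nat" where
  "ch_um H = (LEAST k. \<forall>L :: 'a \<Rightarrow> nat set.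
      (\<forall>v\<in>fst H. (\<forall>c\<in>L v. c > 0) \<and> (infinite (L v) \<or> k \<le> card (L v))) \<longrightarrow>
      (\<exists>C. um_coloring H C \<and> (\<forall>v\<in>fst H. C v \<in> L v)))"

definition star_graph :: "nat \<Rightarrow> nat graph" where
  "star_graph n = ({0..<n}, {(0, i) | i. 1 \<le> i \<and> i < n} \<union> {(i, 0) | i. 1 \<le> i \<and> i < n})"

end

theory Submission
  imports Defs
begin

lemma um_max_not_shared:
  assumes "um_coloring H C" "e \<in> snd H" "u \<in> e" "w \<in> e" "u \<noteq> w"
    and "C u = Max (C ` e)"
  shows "C w \<noteq> C u"
  using assms unfolding um_coloring_def by metis

lemma um_coloring_two_colours:
  assumes "um_coloring H C" "e \<in> snd H" "e \<subseteq> fst H" "finite e"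
    and "u \<in> e" "w \<in> e" "u \<noteq> w" "finite (fst H)"
  shows "2 \<le> card (C ` fst H)"
proof -
  have "Max (C ` e) \<in> C ` e" using assms(4,5) by (intro Max_in) auto
  then obtain m where m: "m \<in> e" "C m = Max (C ` e)" by auto
  obtain x where x: "x \<in> e" "x \<noteq> m" using assms(5-7) by metis
  have "C x \<noteq> C m" using um_max_not_shared[OF assms(1,2) m(1) x(1)] x(2) m(2) by metis
  then have "card {C x, C m} = 2" by simp
  moreover have "{C x, C m} \<subseteq> C ` fst H" using x(1) m(1) assms(3) by auto
  ultimately show ?thesis using assms(8) by (metis card_mono finite_imageI)
qed

lemma injective_coloring_is_um:
  assumes edges: "\<forall>e\<in>snd H. finite e \<and> e \<noteq> {} \<and> e \<subseteq> fst H"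
    and inj: "inj_on C (fst H)" and pos: "\<forall>v\<in>fst H. C v > 0"
  shows "um_coloring H C"
  unfolding um_coloring_def
proof (intro conjI ballI)
  fix e assume e: "e \<in> snd H"
  have "Max (C ` e) \<in> C ` e" using edges e by (intro Max_in) auto
  then obtain v where v: "v \<in> e" "C v = Max (C ` e)" by auto
  have "w = v" if "w \<in> e" "C w = Max (C ` e)" for w
    using that v inj edges e by (metis inj_onD subsetD)
  then show "\<exists>!v. v \<in> e \<and> C v = Max (C ` e)" using v by blast
qed (use pos in auto)

definition list_assignment :: "'a hypergraph \<Rightarrow> nat \<Rightarrow> ('a \<Rightarrow> nat set) \<Rightarrow> bool" where
  "list_assignment H k L \<longleftrightarrow>
     (\<forall>v\<in>fst H. (\<forall>c\<in>L v. c > 0) \<and> (infinite (L v) \<or> k \<le> card (L v)))"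

definition um_choosable :: "'a hypergraph \<Rightarrow> nat \<Rightarrow> bool" where
  "um_choosable H k \<longleftrightarrow>
     (\<forall>L. list_assignment H k L \<longrightarrow> (\<exists>C. um_coloring H C \<and> (\<forall>v\<in>fst H. C v \<in> L v)))"

lemma ch_um_Least: "ch_um H = (LEAST k. um_choosable H k)"
  by (simp add: ch_um_def um_choosable_def list_assignment_def)

text \<open>Greedy choice: from lists with at least |S| entries each one can pick pairwise
  different representatives (Hall's condition holds trivially).\<close>
lemma injective_choice:
  assumes "finite S" "card S \<le> m" "\<forall>v\<in>S. infinite (L v) \<or> m \<le> card (L v)"
  shows "\<exists>f. inj_on f S \<and> (\<forall>v\<in>S. f v \<in> L v)"
  using assms
proof (induction S rule: finite_induct)
  case empty then show ?case by auto
next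
  case (insert x S)
  then obtain f where f: "inj_on f S" "\<forall>v\<in>S. f v \<in> L v" by auto
  have "\<not> L x \<subseteq> f ` S"
  proof
    assume sub: "L x \<subseteq> f ` S"
    then have "finite (L x)" using insert(1) finite_subset by blast
    then have "m \<le> card (L x)" using insert by auto
    also have "\<dots> \<le> card (f ` S)" using sub insert(1) by (simp add: card_mono)
    also have "\<dots> \<le> card S" using insert(1) by (rule card_image_le)
    finally show False using insert by auto
  qed
  then obtain c where c: "c \<in> L x" "c \<notin> f ` S" by auto
  show ?case
    using f c insert(2) by (intro exI[of _ "f(x := c)"]) (auto simp: inj_on_def)
qed

text \<open>Lists of size |V| always suffice, so ch_um is a well-defined least element.\<close>
lemma um_choosable_card:
  assumes "finite (fst H)" "\<forall>e\<in>snd H. finite e \<and> e \<noteq> {} \<and> e \<subseteq> fst H"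
  shows "um_choosable H (card (fst H))"
  unfolding um_choosable_def list_assignment_def
proof (intro allI impI)
  fix L :: "'a \<Rightarrow> nat set"
  assume L: "\<forall>v\<in>fst H. (\<forall>c\<in>L v. c > 0) \<and> (infinite (L v) \<or> card (fst H) \<le> card (L v))"
  then obtain f where f: "inj_on f (fst H)" "\<forall>v\<in>fst H. f v \<in> L v"
    using injective_choice[OF assms(1) order_refl, of L] by blast
  have "\<forall>v\<in>fst H. f v > 0" using f(2) L by blast
  then have "um_coloring H f" using assms(2) f(1) by (intro injective_coloring_is_um)
  then show "\<exists>C. um_coloring H C \<and> (\<forall>v\<in>fst H. C v \<in> L v)" using f by blast
qed

lemma ch_um_ge:
  assumes "um_choosable H k0" "\<And>k. k < m \<Longrightarrow> \<not> um_choosable H k"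
  shows "m \<le> ch_um H"
  using LeastI[of "um_choosable H", OF assms(1)] assms(2) unfolding ch_um_Least
  by (meson not_le)

lemma path_hypergraph_edges:
  "\<forall>e\<in>snd (path_hypergraph G). finite e \<and> e \<noteq> {} \<and> e \<subseteq> fst (path_hypergraph G)"
  unfolding path_hypergraph_def simple_path_def by auto

lemma star_vertices: "fst (path_hypergraph (star_graph n)) = {0..<n}"
  by (simp add: path_hypergraph_def star_graph_def)

lemma star_edge_path:
  assumes "1 \<le> i" "i < n"
  shows "{0, i} \<in> snd (path_hypergraph (star_graph n))"
proof -
  have "simple_path (star_graph n) [0, i]"
    unfolding simple_path_def star_graph_def using assms
    by (auto simp: less_Suc_eq nth_Cons split: nat.splits)
  then show ?thesis unfolding path_hypergraph_def by (auto intro!: exI[of _ "[0, i]"])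
qed

lemma star_leaf_leaf_path:
  assumes "1 \<le> i" "i < n" "1 \<le> j" "j < n" "i \<noteq> j"
  shows "{i, 0, j} \<in> snd (path_hypergraph (star_graph n))"
proof -
  have "simple_path (star_graph n) [i, 0, j]"
    unfolding simple_path_def star_graph_def using assms
    by (auto simp: less_Suc_eq nth_Cons split: nat.splits)
  then show ?thesis unfolding path_hypergraph_def by (auto intro!: exI[of _ "[i, 0, j]"])
qed

text \<open>Every edge of the star joins the centre to a leaf, so a path avoiding the
  centre consists of a single vertex.\<close>
lemma star_path_without_centre:
  assumes "e \<in> snd (path_hypergraph (star_graph n))" "0 \<notin> e"
  shows "\<exists>a. e = {a}"
proof -
  obtain p where p: "simple_path (star_graph n) p" "e = set p"
    using assms(1) by (auto simp: path_hypergraph_def)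
  have "length p < 2"
  proof (rule ccontr)
    assume long: "\<not> length p < 2"
    then have "(p ! 0, p ! 1) \<in> snd (star_graph n)" using p(1) unfolding simple_path_def by auto
    then have "p ! 0 = 0 \<or> p ! 1 = 0" by (auto simp: star_graph_def)
    moreover have "p ! 0 \<in> e" "p ! 1 \<in> e" using long p(2) by (auto intro!: nth_mem)
    ultimately show False using assms(2) by auto
  qed
  with p show ?thesis by (cases p) (auto simp: simple_path_def)
qed

text \<open>If every leaf has a larger colour than the centre, then on each path
  leaf-centre-leaf a leaf colour is the maximum, so all leaves get distinct colours.\<close>
lemma star_leaves_distinct:
  assumes um: "um_coloring (path_hypergraph (star_graph n)) C"
    and above: "\<And>i. 1 \<le> i \<Longrightarrow> i < n \<Longrightarrow> C 0 < C i"
  shows "inj_on C {1..<n}"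
proof (rule inj_onI, rule ccontr)
  fix i j assume ij: "i \<in> {1..<n}" "j \<in> {1..<n}" "C i = C j" "i \<noteq> j"
  let ?e = "{i, 0, j}"
  have "C ` ?e = {C i, C 0}" using ij(3) by auto
  then have "C i = Max (C ` ?e)" using above[of i] ij(1) by simp
  then have "C j \<noteq> C i"
    using um_max_not_shared[OF um star_leaf_leaf_path[of i n j]] ij by auto
  then show False using ij(3) by simp
qed

text \<open>The lists {1..n-2} at the centre and {n-1..2n-4} at the leaves admit no
  um-colouring: the n-1 leaves would need distinct colours from n-2 values.\<close>
lemma star_not_um_choosable:
  assumes "n > 2" "k \<le> n - 2"
  shows "\<not> um_choosable (path_hypergraph (star_graph n)) k"
proof
  let ?H = "path_hypergraph (star_graph n)"
  define L where "L v = (if v = 0 then {1..n-2} else {n-1..2*n-4})" for v :: nat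
  have "card (L v) = n - 2" for v
  proof -
    have "Suc (2 * n - 4) - (n - 1) = n - 2" using assms(1) by arith
    then show ?thesis by (simp add: L_def)
  qed
  moreover have "\<forall>c\<in>L v. c > 0" for v using assms(1) by (auto simp: L_def)
  ultimately have "list_assignment ?H k L" using assms(2) by (simp add: list_assignment_def)
  moreover assume "um_choosable ?H k"
  ultimately obtain C where C: "um_coloring ?H C" "\<forall>v\<in>{0..<n}. C v \<in> L v"
    unfolding um_choosable_def star_vertices by (metis (no_types, lifting))
  have leaf: "C i \<in> {n-1..2*n-4}" if "1 \<le> i" "i < n" for i
  proof -
    have "C i \<in> L i" using C(2) that by simp
    then show ?thesis using that by (simp add: L_def)
  qed
  have "C 0 \<in> L 0" using C(2) assms(1) by simp
  then have "C 0 \<in> {1..n-2}" by (simp add: L_def)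
  then have "C 0 < C i" if "1 \<le> i" "i < n" for i using leaf[OF that] by auto
  then have "inj_on C {1..<n}" by (rule star_leaves_distinct[OF C(1)])
  moreover have "C ` {1..<n} \<subseteq> {n-1..2*n-4}" using leaf by auto
  ultimately have "card {1..<n} \<le> card {n-1..2*n-4}" by (intro card_inj_on_le[of C]) auto
  then show False using assms(1) by simp
qed

text \<open>Colouring the centre 2 and all leaves 1 is unique-maximum: a path through the
  centre has its unique maximum there, any other path is a single leaf.\<close>
lemma star_two_coloring:
  "um_coloring (path_hypergraph (star_graph n)) (\<lambda>v. if v = 0 then 2 else 1)"
  (is "um_coloring ?H ?C")
  unfolding um_coloring_def
proof (intro conjI ballI)
  fix e assume e: "e \<in> snd ?H"
  show "\<exists>!v. v \<in> e \<and> ?C v = Max (?C ` e)"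
  proof (cases "0 \<in> e")
    case True
    have "finite e" using e path_hypergraph_edges by blast
    moreover have "?C v \<le> 2" for v by simp
    ultimately have "Max (?C ` e) = 2" using True by (intro Max_eqI) auto
    moreover have "?C v = 2 \<longleftrightarrow> v = 0" for v by simp
    ultimately show ?thesis using True by metis
  next
    case False
    then obtain a where "e = {a}" using star_path_without_centre[OF e] by blast
    then show ?thesis by (intro ex1I[of _ a]) simp_all
  qed
qed simp

theorem mainTheorem10:
  fixes n :: nat
  assumes "n > 2"
  shows "ch_um (path_hypergraph (star_graph n)) \<ge> n - 1 \<and>
         chi_um (path_hypergraph (star_graph n)) = 2"
proof
  let ?H = "path_hypergraph (star_graph n)"
  have edges: "\<forall>e\<in>snd ?H. finite e \<and> e \<noteq> {} \<and> e \<subseteq> fst ?H"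
    by (rule path_hypergraph_edges)
  show "ch_um ?H \<ge> n - 1"
    using um_choosable_card[OF _ edges] star_not_um_choosable[OF assms]
    by (intro ch_um_ge) (auto simp: star_vertices)
  let ?C = "\<lambda>v::nat. if v = 0 then 2 else (1::nat)"
  have "?C ` {0..<n} = {1, 2}" using assms by force
  then have two: "card (?C ` fst ?H) = 2" by (simp add: star_vertices)
  have at_least_two: "2 \<le> card (D ` fst ?H)" if "um_coloring ?H D" for D
    using um_coloring_two_colours[OF that star_edge_path[of 1 n], of 0 1] edges assms
      star_edge_path[of 1 n] by (auto simp: star_vertices)
  have "\<exists>C. um_coloring ?H C \<and> card (C ` fst ?H) = 2"
    using star_two_coloring[of n] two by blast
  then show "chi_um ?H = 2"
    unfolding chi_um_def using at_least_two by (intro Least_equality) auto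
qed

end
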